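(* Let $a(x),b(x),m(x)\in R_n=\mathbb{F}_2[x]/\langle x^n-1\rangle$ with $b(x)=m(x)a(x)$ in $R_n$. If the generalized bicycle code defined by $a(x)$ and $b(x)$ has dimension larger than zero, then its minimum distance is at most $\mathrm{wt}(m(x))+1$.
   Context: Elements of $R_n$ are identified with binary vectors of length $n$ via their representative of degree $<n$; $\mathrm{wt}$ is the number of nonzero coefficients. The generalized bicycle (GB) code defined by $a(x),b(x)$ is the CSS code on $2n$ qubits, vectors of $\mathbb{F}_2^{2n}$ written as pairs $(u(x),v(x))$, with $C_2=\{(c(x)a(x),c(x)b(x)):c\in R_n\}$ (X-stabilizers), $C_1=\{(u,v):u(x)b(x)+v(x)a(x)=0\text{ in }R_n\}$, $C_2'=\{(c(x)b(x^{-1}),c(x)a(x^{-1})):c\in R_n\}$ (Z-stabilizers), $C_1'=\{(u,v):u(x)a(x^{-1})+v(x)b(x^{-1})=0\}$, where $x^{-1}=x^{n-1}$. Its dimension is $\dim C_1-\dim C_2$ and its minimum distance is $\min\{\min_{w\in C_1\setminus C_2}\mathrm{wt}(w),\ \min_{w\in C_1'\setminus C_2'}\mathrm{wt}(w)\}$. *)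

theory Defs
  imports "HOL-Library.Z2" "HOL-Library.Product_Plus" "HOL-Computational_Algebra.Polynomial"
begin

text \<open>R_n = F_2[x]/(x^n - 1); elements are represented by their unique
  representative polynomial of degree < n over F_2 (type bit).\<close>

definition xn1 :: "nat \<Rightarrow> bit poly" where
  "xn1 n = monom 1 n - 1"

definition Rn :: "nat \<Rightarrow> bit poly set" where
  "Rn n = {p. p mod xn1 n = p}"

definition mulR :: "nat \<Rightarrow> bit poly \<Rightarrow> bit poly \<Rightarrow> bit poly" where
  "mulR n p q = (p * q) mod xn1 n"

text \<open>p(x^{-1}) with x^{-1} = x^{n-1}, for a representative p of degree < n.\<close>
definition conjR :: "nat \<Rightarrow> bit poly \<Rightarrow> bit poly" where
  "conjR n p = (\<Sum>i<n. monom (coeff p i) ((n - i) mod n))"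

definition wt :: "bit poly \<Rightarrow> nat" where
  "wt p = card {i. coeff p i \<noteq> 0}"

definition pwt :: "bit poly \<times> bit poly \<Rightarrow> nat" where
  "pwt w = wt (fst w) + wt (snd w)"

definition GB_C2 :: "nat \<Rightarrow> bit poly \<Rightarrow> bit poly \<Rightarrow> (bit poly \<times> bit poly) set" where
  "GB_C2 n a b = {(mulR n c a, mulR n c b) | c. c \<in> Rn n}"

definition GB_C1 :: "nat \<Rightarrow> bit poly \<Rightarrow> bit poly \<Rightarrow> (bit poly \<times> bit poly) set" where
  "GB_C1 n a b = {(u, v). u \<in> Rn n \<and> v \<in> Rn n \<and> mulR n u b + mulR n v a = 0}"

definition GB_C2' :: "nat \<Rightarrow> bit poly \<Rightarrow> bit poly \<Rightarrow> (bit poly \<times> bit poly) set" where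
  "GB_C2' n a b = {(mulR n c (conjR n b), mulR n c (conjR n a)) | c. c \<in> Rn n}"

definition GB_C1' :: "nat \<Rightarrow> bit poly \<Rightarrow> bit poly \<Rightarrow> (bit poly \<times> bit poly) set" where
  "GB_C1' n a b = {(u, v). u \<in> Rn n \<and> v \<in> Rn n \<and>
      mulR n u (conjR n a) + mulR n v (conjR n b) = 0}"

definition f2span :: "(bit poly \<times> bit poly) set \<Rightarrow> (bit poly \<times> bit poly) set" where
  "f2span B = {sum (\<lambda>x. x) T | T. T \<subseteq> B \<and> finite T}"

definition f2dim :: "(bit poly \<times> bit poly) set \<Rightarrow> nat" where
  "f2dim S = (LEAST k. \<exists>B. finite B \<and> card B = k \<and> B \<subseteq> S \<and> f2span B = S)"

definition GB_dim :: "nat \<Rightarrow> bit poly \<Rightarrow> bit poly \<Rightarrow> int" where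
  "GB_dim n a b = int (f2dim (GB_C1 n a b)) - int (f2dim (GB_C2 n a b))"

definition GB_dist :: "nat \<Rightarrow> bit poly \<Rightarrow> bit poly \<Rightarrow> nat" where
  "GB_dist n a b = Min ({pwt w | w. w \<in> GB_C1 n a b - GB_C2 n a b}
                       \<union> {pwt w | w. w \<in> GB_C1' n a b - GB_C2' n a b})"

end

theory Submission
  imports Defs
begin

text \<open>The pair (1, m) lies in C1, since b = m a and the characteristic is 2, and it has weight
  wt m + 1. It is not a stabilizer: (1, m) = (c a, c b) would make a a unit of R_n, and over a unit
  a every solution of u b + v a = 0 is (u c) \<cdot> (a, b), so C1 = C2 and the code would have
  dimension zero.\<close>

lemma bit_poly_uminus [simp]: "- (p :: bit poly) = p"
  by (rule poly_eqI) simp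

lemma bit_poly_add_self: "(p :: bit poly) + p = 0"
  by (metis add.right_inverse bit_poly_uminus)

lemma bit_poly_add_eq_0_iff: "(p :: bit poly) + q = 0 \<longleftrightarrow> p = q"
  by (metis add_eq_0_iff bit_poly_uminus)

lemma degree_xn1: "0 < n \<Longrightarrow> degree (xn1 n) = n"
  unfolding xn1_def diff_conv_add_uminus
  by (simp add: degree_add_eq_left degree_monom_eq)

lemma Rn_iff_degree_less:
  assumes "0 < n" shows "p \<in> Rn n \<longleftrightarrow> degree p < n"
proof -
  have "xn1 n \<noteq> 0"
    using degree_xn1[OF assms] assms by auto
  then show ?thesis
    unfolding Rn_def using degree_mod_less'[of "xn1 n" p] mod_poly_less[of p "xn1 n"]
    by (cases "p = 0") (auto simp: degree_xn1[OF assms] assms)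
qed

lemma one_in_Rn: "0 < n \<Longrightarrow> 1 \<in> Rn n"
  by (simp add: Rn_iff_degree_less)

lemma mulR_in_Rn: "mulR n p q \<in> Rn n"
  by (simp add: Rn_def mulR_def)

lemma mulR_commute: "mulR n p q = mulR n q p"
  by (simp add: mulR_def mult.commute)

lemma mulR_assoc: "mulR n (mulR n p q) r = mulR n p (mulR n q r)"
  by (simp add: mulR_def mod_mult_left_eq mod_mult_right_eq mult.assoc)

lemma mulR_one: "p \<in> Rn n \<Longrightarrow> mulR n p 1 = p"
  by (simp add: mulR_def Rn_def)

lemma one_mulR: "p \<in> Rn n \<Longrightarrow> mulR n 1 p = p"
  by (simp add: mulR_def Rn_def)

lemma mulR_left_commute: "mulR n p (mulR n q r) = mulR n q (mulR n p r)"
  by (metis mulR_assoc mulR_commute)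

lemma wt_one: "wt 1 = 1"
proof -
  have "{i. coeff (1 :: bit poly) i \<noteq> 0} = {0}"
    by (auto simp: coeff_1)
  then show ?thesis
    by (simp add: wt_def)
qed

lemma wt_le: assumes "0 < n" and "p \<in> Rn n" shows "wt p \<le> n"
proof -
  have "{i. coeff p i \<noteq> 0} \<subseteq> {..<n}"
    using assms le_degree by (fastforce simp: Rn_iff_degree_less)
  then show ?thesis
    unfolding wt_def by (metis card_lessThan card_mono finite_lessThan)
qed

lemma GB_C2_subset_C1: "GB_C2 n a b \<subseteq> GB_C1 n a b"
proof
  fix w assume "w \<in> GB_C2 n a b"
  then obtain d where w: "w = (mulR n d a, mulR n d b)"
    by (auto simp: GB_C2_def)
  have "mulR n (mulR n d a) b = mulR n (mulR n d b) a"
    by (simp add: mulR_assoc mulR_commute[of n a b])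
  then show "w \<in> GB_C1 n a b"
    by (simp add: w GB_C1_def mulR_in_Rn bit_poly_add_self)
qed

lemma GB_C1_subset_C2_if_unit:
  assumes unit: "mulR n c a = 1"
  shows "GB_C1 n a b \<subseteq> GB_C2 n a b"
proof
  fix w assume "w \<in> GB_C1 n a b"
  then obtain u v where w: "w = (u, v)" and u: "u \<in> Rn n" and v: "v \<in> Rn n"
    and syndrome: "mulR n u b = mulR n v a"
    by (auto simp: GB_C1_def bit_poly_add_eq_0_iff)
  have "mulR n (mulR n u c) b = mulR n c (mulR n u b)"
    by (simp add: mulR_assoc mulR_left_commute[of n u c])
  also have "\<dots> = mulR n v (mulR n c a)"
    by (simp add: syndrome mulR_left_commute[of n c v])
  also have "\<dots> = v"
    by (simp add: unit mulR_one v)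
  finally have "mulR n (mulR n u c) b = v" .
  moreover have "mulR n (mulR n u c) a = u"
    by (simp add: unit mulR_assoc mulR_one u)
  ultimately show "w \<in> GB_C2 n a b"
    unfolding GB_C2_def using w mulR_in_Rn[of n u c] by force
qed

lemma GB_dist_le:
  assumes "0 < n" and "w \<in> GB_C1 n a b - GB_C2 n a b"
  shows "GB_dist n a b \<le> pwt w"
proof -
  let ?S = "{pwt w | w. w \<in> GB_C1 n a b - GB_C2 n a b}
          \<union> {pwt w | w. w \<in> GB_C1' n a b - GB_C2' n a b}"
  have "pwt (u, v) \<le> 2 * n" if "u \<in> Rn n" "v \<in> Rn n" for u v
    using wt_le[OF \<open>0 < n\<close>, of u] wt_le[OF \<open>0 < n\<close>, of v] that by (simp add: pwt_def)
  then have "?S \<subseteq> {..2 * n}"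
    by (fastforce simp: GB_C1_def GB_C1'_def)
  then have "finite ?S"
    by (rule finite_subset) simp
  then show ?thesis
    unfolding GB_dist_def using assms(2) by (blast intro: Min_le)
qed

theorem lemma1:
  fixes n :: nat and a b m :: "bit poly"
  assumes "n > 0"
    and "a \<in> Rn n" and "b \<in> Rn n" and "m \<in> Rn n"
    and "b = mulR n m a"
    and "GB_dim n a b > 0"
  shows "GB_dist n a b \<le> wt m + 1"
proof -
  have "mulR n 1 b = mulR n m a"
    using assms(3,5) by (simp add: one_mulR)
  then have in_C1: "(1, m) \<in> GB_C1 n a b"
    using assms(1,4) by (simp add: GB_C1_def bit_poly_add_eq_0_iff one_in_Rn mulR_in_Rn)
  have not_in_C2: "(1, m) \<notin> GB_C2 n a b"
  proof
    assume "(1, m) \<in> GB_C2 n a b"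
    then obtain c where "mulR n c a = 1"
      by (auto simp: GB_C2_def)
    then have "GB_C1 n a b = GB_C2 n a b"
      using GB_C1_subset_C2_if_unit GB_C2_subset_C1 by blast
    then show False
      using assms(6) by (simp add: GB_dim_def)
  qed
  have "GB_dist n a b \<le> pwt (1, m)"
    using GB_dist_le assms(1) in_C1 not_in_C2 by blast
  then show ?thesis
    by (simp add: pwt_def wt_one)
qed

end
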